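(* Let $\mathfrak g$ be a Lie algebra and $r_1,r_2\in\wedge^2\mathfrak g$ skew-symmetric $r$-matrices, with induced triangular Lie bialgebras $(\mathfrak g,[\cdot,\cdot],\delta_1)$ and $(\mathfrak g,[\cdot,\cdot],\delta_2)$, $\delta_i(x)=[x,r_i]$. If $(\phi,\varphi)$ is a weak homomorphism (resp. weak isomorphism) from $r_2$ to $r_1$, then $(\phi,\varphi)$ is a weak homomorphism (resp. weak isomorphism) from the Lie bialgebra $(\mathfrak g,[\cdot,\cdot],\delta_2)$ to $(\mathfrak g,[\cdot,\cdot],\delta_1)$.
   Context: A skew-symmetric $r$-matrix is $r\in\wedge^2\mathfrak g$ with $[r,r]=0$ (Gerstenhaber bracket on $\wedge^\bullet\mathfrak g$); $r^\sharp:\mathfrak g^*\to\mathfrak g$, $\langle r^\sharp\xi,\eta\rangle=\langle r,\xi\otimes\eta\rangle$. The triangular Lie bialgebra has cobracket $\delta(x)=[x,r]\in\wedge^2\mathfrak g$, whose dual Lie algebra structure on $\mathfrak g^*$ is $[\xi,\eta]_r=\mathrm{ad}^*_{r^\sharp\xi}\eta-\mathrm{ad}^*_{r^\sharp\eta}\xi$ with $\langle\mathrm{ad}^*_x\xi,y\rangle=-\langle\xi,[x,y]\rangle$. A weak homomorphism from $r_2$ to $r_1$ is a pair of a Lie algebra homomorphism $\phi:\mathfrak g\to\mathfrak g$ and a linear map $\varphi:\mathfrak g\to\mathfrak g$ with $(\varphi\otimes\mathrm{Id}_{\mathfrak g})(r_1)=(\mathrm{Id}_{\mathfrak g}\otimes\phi)(r_2)$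 and $\varphi[\phi(x),y]=[x,\varphi(y)]$ for all $x,y$; weak isomorphism if $\phi,\varphi$ are also linear isomorphisms. A weak homomorphism from the Lie bialgebra $(\mathfrak g,[\cdot,\cdot],\delta_2)$ to $(\mathfrak g,[\cdot,\cdot],\delta_1)$ is a pair of a Lie algebra homomorphism $\phi:\mathfrak g\to\mathfrak g$ and a linear $\varphi:\mathfrak g\to\mathfrak g$ such that $\varphi^*:(\mathfrak g^*,[\cdot,\cdot]_{r_2})\to(\mathfrak g^*,[\cdot,\cdot]_{r_1})$ is a Lie algebra homomorphism and $\varphi[\phi(x),y]=[x,\varphi(y)]$ for all $x,y\in\mathfrak g$; a weak isomorphism if moreover $\phi,\varphi$ are linear isomorphisms. *)

theory Defs
  imports Main "HOL-Library.Function_Algebras"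
begin

text \<open>A finite-dimensional Lie algebra g is modelled as the coordinate space
  'n \<Rightarrow> 'k (with a finite index type 'n, i.e. a fixed basis e_i) over a field 'k
  of characteristic zero, with a bilinear, alternating bracket satisfying Jacobi.
  The dual space g* is modelled by coordinates w.r.t. the dual basis, so that
  the pairing is pair xi x = sum_i xi_i x_i.  Elements of g (x) g are coefficient
  matrices r :: 'n \<Rightarrow> 'n \<Rightarrow> 'k, meaning r = sum_{i,j} r i j e_i (x) e_j.\<close>

type_synonym ('n, 'k) vect = "'n \<Rightarrow> 'k"

definition smul :: "'k::field \<Rightarrow> ('n, 'k) vect \<Rightarrow> ('n, 'k) vect" where
  "smul c x = (\<lambda>i. c * x i)"

definition basis_vec :: "'n \<Rightarrow> ('n, 'k::field) vect" where
  "basis_vec i = (\<lambda>j. if j = i then 1 else 0)"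

definition pair :: "('n::finite, 'k::field) vect \<Rightarrow> ('n, 'k) vect \<Rightarrow> 'k" where
  "pair xi x = (\<Sum>i\<in>UNIV. xi i * x i)"

definition lin_map :: "(('n, 'k::field) vect \<Rightarrow> ('m, 'k) vect) \<Rightarrow> bool" where
  "lin_map f \<longleftrightarrow> (\<forall>x y. f (x + y) = f x + f y) \<and> (\<forall>c x. f (smul c x) = smul c (f x))"

definition lie_algebra :: "(('n::finite, 'k::field) vect \<Rightarrow> ('n, 'k) vect \<Rightarrow> ('n, 'k) vect) \<Rightarrow> bool" where
  "lie_algebra br \<longleftrightarrow>
     (\<forall>x. lin_map (br x)) \<and> (\<forall>y. lin_map (\<lambda>x. br x y)) \<and>
     (\<forall>x. br x x = 0) \<and>
     (\<forall>x y z. br x (br y z) + br y (br z x) + br z (br x y) = 0)"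

definition lie_hom :: "(('n::finite, 'k::field) vect \<Rightarrow> ('n, 'k) vect \<Rightarrow> ('n, 'k) vect)
    \<Rightarrow> (('n, 'k) vect \<Rightarrow> ('n, 'k) vect) \<Rightarrow> bool" where
  "lie_hom br f \<longleftrightarrow> lin_map f \<and> (\<forall>x y. f (br x y) = br (f x) (f y))"

definition skew :: "('n \<Rightarrow> 'n \<Rightarrow> 'k::field) \<Rightarrow> bool" where
  "skew r \<longleftrightarrow> (\<forall>i j. r i j = - r j i)"

text \<open>Coordinates of the tensor [r12,r13]+[r12,r23]+[r13,r23] in g(x)g(x)g.
  For skew-symmetric r this is a nonzero constant multiple of the Gerstenhaber
  (Schouten) bracket [r,r] in wedge^3 g (characteristic zero), so [r,r]=0 iff it vanishes.\<close>
definition cybe :: "(('n::finite, 'k::field) vect \<Rightarrow> ('n, 'k) vect \<Rightarrow> ('n, 'k) vect)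
    \<Rightarrow> ('n \<Rightarrow> 'n \<Rightarrow> 'k) \<Rightarrow> 'n \<Rightarrow> 'n \<Rightarrow> 'n \<Rightarrow> 'k" where
  "cybe br r a b c =
     (\<Sum>i\<in>UNIV. \<Sum>k\<in>UNIV. r i b * r k c * br (basis_vec i) (basis_vec k) a)
   + (\<Sum>j\<in>UNIV. \<Sum>k\<in>UNIV. r a j * r k c * br (basis_vec j) (basis_vec k) b)
   + (\<Sum>j\<in>UNIV. \<Sum>l\<in>UNIV. r a j * r b l * br (basis_vec j) (basis_vec l) c)"

definition r_matrix :: "(('n::finite, 'k::field) vect \<Rightarrow> ('n, 'k) vect \<Rightarrow> ('n, 'k) vect)
    \<Rightarrow> ('n \<Rightarrow> 'n \<Rightarrow> 'k) \<Rightarrow> bool" where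
  "r_matrix br r \<longleftrightarrow> skew r \<and> (\<forall>a b c. cybe br r a b c = 0)"

text \<open>r^sharp : g* \<rightarrow> g, pair (r^sharp xi) eta = <r, xi (x) eta> = sum_{i,j} r i j xi_i eta_j.\<close>
definition rsharp :: "('n::finite \<Rightarrow> 'n \<Rightarrow> 'k::field) \<Rightarrow> ('n, 'k) vect \<Rightarrow> ('n, 'k) vect" where
  "rsharp r xi = (\<lambda>j. \<Sum>i\<in>UNIV. xi i * r i j)"

text \<open>Coadjoint action: pair (ad*_x xi) y = - pair xi [x,y].\<close>
definition coad :: "(('n::finite, 'k::field) vect \<Rightarrow> ('n, 'k) vect \<Rightarrow> ('n, 'k) vect)
    \<Rightarrow> ('n, 'k) vect \<Rightarrow> ('n, 'k) vect \<Rightarrow> ('n, 'k) vect" where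
  "coad br x xi = (\<lambda>j. - pair xi (br x (basis_vec j)))"

definition dual_bracket :: "(('n::finite, 'k::field) vect \<Rightarrow> ('n, 'k) vect \<Rightarrow> ('n, 'k) vect)
    \<Rightarrow> ('n \<Rightarrow> 'n \<Rightarrow> 'k) \<Rightarrow> ('n, 'k) vect \<Rightarrow> ('n, 'k) vect \<Rightarrow> ('n, 'k) vect" where
  "dual_bracket br r xi eta = coad br (rsharp r xi) eta - coad br (rsharp r eta) xi"

definition dual_map :: "(('n::finite, 'k::field) vect \<Rightarrow> ('n, 'k) vect) \<Rightarrow> ('n, 'k) vect \<Rightarrow> ('n, 'k) vect" where
  "dual_map f xi = (\<lambda>j. pair xi (f (basis_vec j)))"

definition tensor_map :: "(('n::finite, 'k::field) vect \<Rightarrow> ('n, 'k) vect) \<Rightarrow> (('n, 'k) vect \<Rightarrow> ('n, 'k) vect)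
    \<Rightarrow> ('n \<Rightarrow> 'n \<Rightarrow> 'k) \<Rightarrow> 'n \<Rightarrow> 'n \<Rightarrow> 'k" where
  "tensor_map f g r a b = (\<Sum>i\<in>UNIV. \<Sum>j\<in>UNIV. r i j * f (basis_vec i) a * g (basis_vec j) b)"

definition lin_iso :: "(('n, 'k::field) vect \<Rightarrow> ('n, 'k) vect) \<Rightarrow> bool" where
  "lin_iso f \<longleftrightarrow> lin_map f \<and> bij f"

definition weak_hom_r where
  "weak_hom_r br r2 r1 phi vphi \<longleftrightarrow>
     lie_hom br phi \<and> lin_map vphi \<and>
     tensor_map vphi id r1 = tensor_map id phi r2 \<and>
     (\<forall>x y. vphi (br (phi x) y) = br x (vphi y))"

definition weak_iso_r where
  "weak_iso_r br r2 r1 phi vphi \<longleftrightarrow> weak_hom_r br r2 r1 phi vphi \<and> lin_iso phi \<and> lin_iso vphi"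

text \<open>vphi* : (g*,[,]_{r2}) \<rightarrow> (g*,[,]_{r1}) is a Lie algebra homomorphism
  (it is automatically linear).\<close>
definition dual_lie_hom where
  "dual_lie_hom br r2 r1 vphi \<longleftrightarrow>
     lin_map (dual_map vphi) \<and>
     (\<forall>xi eta. dual_map vphi (dual_bracket br r2 xi eta)
                = dual_bracket br r1 (dual_map vphi xi) (dual_map vphi eta))"

definition weak_hom_bialg where
  "weak_hom_bialg br r2 r1 phi vphi \<longleftrightarrow>
     lie_hom br phi \<and> lin_map vphi \<and>
     dual_lie_hom br r2 r1 vphi \<and>
     (\<forall>x y. vphi (br (phi x) y) = br x (vphi y))"

definition weak_iso_bialg where
  "weak_iso_bialg br r2 r1 phi vphi \<longleftrightarrow> weak_hom_bialg br r2 r1 phi vphi \<and> lin_iso phi \<and> lin_iso vphi"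

end

theory Submission
  imports Defs
begin

(* The tensor identity (vphi (x) id) r1 = (id (x) phi) r2 says that
   phi o r2^# = r1^# o vphi^*, and dualising vphi [phi x, y] = [x, vphi y] gives
   vphi^* o ad^*_x = ad^*_(phi x) o vphi^*.  Applying both to each of the two terms
   of [xi, eta]_r2 turns it into [vphi^* xi, vphi^* eta]_r1. *)

lemma sum_fun_apply:
  "finite A \<Longrightarrow> (\<Sum>i\<in>A. (g i :: 'a \<Rightarrow> 'b::comm_monoid_add)) x = (\<Sum>i\<in>A. g i x)"
  by (induction A rule: finite_induct) auto

lemma lin_map_zero:
  assumes "lin_map f"
  shows "f 0 = 0"
proof -
  have "f (smul 0 0) = smul 0 (f 0)" using assms unfolding lin_map_def by blast
  moreover have "smul 0 (0 :: ('a, 'b) vect) = 0" "smul 0 (f 0) = 0"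
    by (simp_all add: smul_def fun_eq_iff)
  ultimately show ?thesis by simp
qed

lemma lin_map_sum:
  assumes lf: "lin_map f" and fin: "finite A"
  shows "f (\<Sum>i\<in>A. g i) = (\<Sum>i\<in>A. f (g i))"
  using fin
proof (induction A rule: finite_induct)
  case empty
  then show ?case using lin_map_zero[OF lf] by (simp only: sum.empty)
next
  case (insert a A)
  have "f (\<Sum>i\<in>insert a A. g i) = f (g a + (\<Sum>i\<in>A. g i))"
    using insert(1,2) by (simp add: sum.insert del: plus_fun_def)
  also have "\<dots> = f (g a) + f (\<Sum>i\<in>A. g i)" using lf unfolding lin_map_def by blast
  also have "\<dots> = (\<Sum>i\<in>insert a A. f (g i))"
    using insert by (simp add: sum.insert del: plus_fun_def)
  finally show ?case .
qed

lemma vect_basis_expansion: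
  "(y :: ('n::finite, 'k::field) vect) = (\<Sum>i\<in>UNIV. smul (y i) (basis_vec i))"
proof (rule ext)
  fix j
  have "(\<Sum>i\<in>UNIV. smul (y i) (basis_vec i)) j = (\<Sum>i\<in>UNIV. y i * (if j = i then 1 else 0))"
    by (simp add: sum_fun_apply smul_def basis_vec_def)
  also have "\<dots> = y j" by (simp add: if_distrib cong: if_cong)
  finally show "y j = (\<Sum>i\<in>UNIV. smul (y i) (basis_vec i)) j" by simp
qed

lemma lin_map_apply_basis:
  assumes "lin_map (f :: ('n::finite, 'k::field) vect \<Rightarrow> ('m, 'k) vect)"
  shows "f y a = (\<Sum>i\<in>UNIV. y i * f (basis_vec i) a)"
proof -
  have "f y = f (\<Sum>i\<in>UNIV. smul (y i) (basis_vec i))"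
    using vect_basis_expansion[of y] by simp
  also have "\<dots> = (\<Sum>i\<in>UNIV. f (smul (y i) (basis_vec i)))"
    by (rule lin_map_sum[OF assms]) simp
  also have "\<dots> = (\<Sum>i\<in>UNIV. smul (y i) (f (basis_vec i)))"
    using assms unfolding lin_map_def by simp
  finally show ?thesis by (simp add: sum_fun_apply smul_def)
qed

lemma pair_lin_map:
  fixes f :: "('n::finite, 'k::field) vect \<Rightarrow> ('m::finite, 'k) vect"
  assumes "lin_map f"
  shows "pair eta (f y) = (\<Sum>i\<in>UNIV. y i * pair eta (f (basis_vec i)))"
proof -
  have "pair eta (f y) = (\<Sum>a\<in>UNIV. eta a * (\<Sum>i\<in>UNIV. y i * f (basis_vec i) a))"
    unfolding pair_def by (simp only: lin_map_apply_basis[OF assms, of y])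
  also have "\<dots> = (\<Sum>i\<in>UNIV. y i * pair eta (f (basis_vec i)))"
    unfolding pair_def sum_distrib_left by (subst sum.swap) (simp add: mult_ac)
  finally show ?thesis .
qed

lemma lin_map_dual_map: "lin_map (dual_map f)"
  unfolding lin_map_def dual_map_def pair_def smul_def
  by (auto simp: fun_eq_iff distrib_left distrib_right sum.distrib sum_distrib_left mult_ac)

lemma dual_map_diff: "dual_map f (a - b) = dual_map f a - dual_map f b"
  unfolding dual_map_def pair_def by (auto simp: fun_eq_iff left_diff_distrib sum_subtractf)

lemma dual_map_coad:
  assumes lin_br: "lin_map (br x)" and lin_vphi: "lin_map vphi"
    and intertwine: "\<forall>y. vphi (br a y) = br x (vphi y)"
  shows "dual_map vphi (coad br x eta) = coad br a (dual_map vphi eta)"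
proof (rule ext)
  fix j
  have "dual_map vphi (coad br x eta) j
      = - (\<Sum>i\<in>UNIV. vphi (basis_vec j) i * pair eta (br x (basis_vec i)))"
    by (simp add: dual_map_def coad_def pair_def sum_negf mult_ac)
  also have "\<dots> = - pair eta (br x (vphi (basis_vec j)))"
    using pair_lin_map[OF lin_br, of eta "vphi (basis_vec j)"] by simp
  also have "\<dots> = - pair eta (vphi (br a (basis_vec j)))" using intertwine by simp
  also have "\<dots> = - (\<Sum>i\<in>UNIV. br a (basis_vec j) i * pair eta (vphi (basis_vec i)))"
    using pair_lin_map[OF lin_vphi, of eta "br a (basis_vec j)"] by simp
  also have "\<dots> = coad br a (dual_map vphi eta) j"
    by (simp add: dual_map_def coad_def pair_def mult_ac)
  finally show "dual_map vphi (coad br x eta) j = coad br a (dual_map vphi eta) j" .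
qed

lemma rsharp_tensor_map:
  fixes r1 r2 :: "'n::finite \<Rightarrow> 'n \<Rightarrow> 'k::field"
  assumes lin_phi: "lin_map phi"
    and tensor: "tensor_map vphi id r1 = tensor_map id phi r2"
  shows "phi (rsharp r2 xi) = rsharp r1 (dual_map vphi xi)"
proof (rule ext)
  fix b
  have left: "tensor_map vphi id r1 a b = (\<Sum>i\<in>UNIV. r1 i b * vphi (basis_vec i) a)" for a
    unfolding tensor_map_def by (simp add: basis_vec_def mult_ac if_distrib cong: if_cong)
  have right: "tensor_map id phi r2 a b = (\<Sum>j\<in>UNIV. r2 a j * phi (basis_vec j) b)" for a
    unfolding tensor_map_def
    by (subst sum.swap)
      (simp add: basis_vec_def mult.commute[of _ "if _ then _ else _"]
        if_distrib[of "\<lambda>u. u * _"] cong: if_cong)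
  have "phi (rsharp r2 xi) b = (\<Sum>j\<in>UNIV. (\<Sum>a\<in>UNIV. xi a * r2 a j) * phi (basis_vec j) b)"
    unfolding lin_map_apply_basis[OF lin_phi, of "rsharp r2 xi"] by (simp add: rsharp_def)
  also have "\<dots> = (\<Sum>a\<in>UNIV. xi a * tensor_map id phi r2 a b)"
    unfolding right sum_distrib_left sum_distrib_right by (subst sum.swap) (simp add: mult_ac)
  also have "\<dots> = (\<Sum>a\<in>UNIV. xi a * tensor_map vphi id r1 a b)" using tensor by simp
  also have "\<dots> = rsharp r1 (dual_map vphi xi) b"
    unfolding left rsharp_def dual_map_def pair_def sum_distrib_left sum_distrib_right
    by (subst sum.swap) (simp add: mult_ac)
  finally show "phi (rsharp r2 xi) b = rsharp r1 (dual_map vphi xi) b" .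
qed

lemma weak_hom_r_imp_weak_hom_bialg:
  assumes lin_br: "\<forall>x. lin_map (br x)" and hom: "weak_hom_r br r2 r1 phi vphi"
  shows "weak_hom_bialg br r2 r1 phi vphi"
proof -
  have lin_phi: "lin_map phi" and lin_vphi: "lin_map vphi"
    and tensor: "tensor_map vphi id r1 = tensor_map id phi r2"
    and intertwine: "\<forall>x y. vphi (br (phi x) y) = br x (vphi y)"
    using hom unfolding weak_hom_r_def lie_hom_def by blast+
  have coad: "dual_map vphi (coad br x eta) = coad br (phi x) (dual_map vphi eta)" for x eta
    by (rule dual_map_coad[OF lin_br[rule_format] lin_vphi]) (simp add: intertwine)
  have "dual_map vphi (dual_bracket br r2 xi eta)
      = dual_bracket br r1 (dual_map vphi xi) (dual_map vphi eta)" for xi eta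
    unfolding dual_bracket_def dual_map_diff coad rsharp_tensor_map[OF lin_phi tensor] ..
  then show ?thesis
    using hom lin_map_dual_map unfolding weak_hom_bialg_def weak_hom_r_def dual_lie_hom_def
    by blast
qed

theorem proposition7p17:
  fixes br :: "('n::finite \<Rightarrow> 'k::field_char_0) \<Rightarrow> ('n \<Rightarrow> 'k) \<Rightarrow> ('n \<Rightarrow> 'k)"
    and r1 r2 :: "'n \<Rightarrow> 'n \<Rightarrow> 'k"
    and phi vphi :: "('n \<Rightarrow> 'k) \<Rightarrow> ('n \<Rightarrow> 'k)"
  assumes "lie_algebra br"
    and "r_matrix br r1"
    and "r_matrix br r2"
  shows "(weak_hom_r br r2 r1 phi vphi \<longrightarrow> weak_hom_bialg br r2 r1 phi vphi)
       \<and> (weak_iso_r br r2 r1 phi vphi \<longrightarrow> weak_iso_bialg br r2 r1 phi vphi)"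
proof -
  have "\<forall>x. lin_map (br x)" using assms(1) unfolding lie_algebra_def by blast
  then show ?thesis
    using weak_hom_r_imp_weak_hom_bialg unfolding weak_iso_r_def weak_iso_bialg_def by blast
qed

end
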